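(* Let $X$ be a Banach space and $x\in S_X$. The following are equivalent: (1) $x$ is a Daugavet point (respectively, super Daugavet point, ccs Daugavet point); (2) $rx$ is a Daugavet point (respectively, super Daugavet point, ccs Daugavet point) for every $r\in[0,1]$; (3) $rx$ is a Daugavet point (respectively, super Daugavet point, ccs Daugavet point) for some $r\in(0,1)$.
   Context: For a Banach space $X$: slices of $B_X$ are non-empty sets $\{y\in B_X:\operatorname{Re}x^*(y)>\|x^*\|-\delta\}$ ($x^*\in X^*$, $\delta>0$); a ccs of $B_X$ is $\sum_{i=1}^n\lambda_iS_i$ with $\lambda_i\in(0,1]$, $\sum\lambda_i=1$, $S_i$ slices. For any $z\in B_X$ (not necessarily of norm one): $z$ is a Daugavet point (resp. super Daugavet point, ccs Daugavet point) if $\sup_{y\in A}\|z-y\|=\|z\|+1$ for every slice (resp. non-empty relatively weakly open subset, ccs) $A$ of $B_X$. *)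

theory Defs
  imports "HOL-Analysis.Analysis"
begin

definition slice :: "('a::real_normed_vector \<Rightarrow> real) \<Rightarrow> real \<Rightarrow> 'a set" where
  "slice f \<delta> = {y \<in> cball 0 1. f y > onorm f - \<delta>}"

definition is_slice :: "'a::real_normed_vector set \<Rightarrow> bool" where
  "is_slice S \<longleftrightarrow> (\<exists>f \<delta>. bounded_linear f \<and> \<delta> > 0 \<and> S = slice f \<delta> \<and> S \<noteq> {})"

definition weakly_open_set :: "'a::real_normed_vector set \<Rightarrow> bool" where
  "weakly_open_set U \<longleftrightarrow> (\<forall>x\<in>U. \<exists>(F::('a \<Rightarrow> real) set) e. finite F \<and> (\<forall>f\<in>F. bounded_linear f) \<and> e > 0 \<and>
      {y. \<forall>f\<in>F. \<bar>f y - f x\<bar> < e} \<subseteq> U)"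

definition is_rel_weakly_open_ball :: "'a::real_normed_vector set \<Rightarrow> bool" where
  "is_rel_weakly_open_ball A \<longleftrightarrow> A \<noteq> {} \<and> (\<exists>U. weakly_open_set U \<and> A = U \<inter> cball 0 1)"

definition is_ccs :: "'a::real_normed_vector set \<Rightarrow> bool" where
  "is_ccs A \<longleftrightarrow> (\<exists>(n::nat) (lam::nat \<Rightarrow> real) (S::nat \<Rightarrow> 'a set).
      n \<ge> 1 \<and> (\<forall>i<n. 0 < lam i \<and> lam i \<le> 1) \<and> (\<Sum>i<n. lam i) = 1 \<and>
      (\<forall>i<n. is_slice (S i)) \<and>
      A = {\<Sum>i<n. lam i *\<^sub>R y i | y. \<forall>i<n. y i \<in> S i})"

definition daugavet_point :: "'a::real_normed_vector \<Rightarrow> bool" where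
  "daugavet_point z \<longleftrightarrow> z \<in> cball 0 1 \<and>
     (\<forall>A. is_slice A \<longrightarrow> (SUP y\<in>A. norm (z - y)) = norm z + 1)"

definition super_daugavet_point :: "'a::real_normed_vector \<Rightarrow> bool" where
  "super_daugavet_point z \<longleftrightarrow> z \<in> cball 0 1 \<and>
     (\<forall>A. is_rel_weakly_open_ball A \<longrightarrow> (SUP y\<in>A. norm (z - y)) = norm z + 1)"

definition ccs_daugavet_point :: "'a::real_normed_vector \<Rightarrow> bool" where
  "ccs_daugavet_point z \<longleftrightarrow> z \<in> cball 0 1 \<and>
     (\<forall>A. is_ccs A \<longrightarrow> (SUP y\<in>A. norm (z - y)) = norm z + 1)"

end

theory Submission
  imports Defs
begin

text \<open>Fix a nonempty subset A of the unit ball and put \<open>\<phi>(t) = sup\<^bsub>y\<in>A\<^esub> \<parallel>t x - y\<parallel>\<close>.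
  Then \<open>\<phi>\<close> is 1-Lipschitz, \<open>\<phi>(t) \<le> t + 1\<close>, and \<open>\<phi>(r) \<le> r \<phi>(1) + (1 - r)\<close> for \<open>r \<in> [0,1]\<close>.
  So \<open>\<phi>(1) = 2\<close> forces \<open>\<phi>(r) = r + 1\<close> on \<open>[0,1]\<close>, and \<open>\<phi>(r) = r + 1\<close> for a single
  \<open>r > 0\<close> forces \<open>\<phi>(1) = 2\<close>.\<close>

lemma bdd_above_norm_diff:
  fixes A :: "'a::real_normed_vector set"
  assumes "bounded A"
  shows "bdd_above ((\<lambda>y. norm (z - y)) ` A)"
proof -
  obtain B where "\<forall>y\<in>A. norm y \<le> B" using assms bounded_iff by blast
  then have "\<forall>y\<in>A. norm (z - y) \<le> norm z + B"
    by (meson add_left_mono norm_triangle_ineq4 order_trans)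
  then show ?thesis by auto
qed

lemma SUP_norm_diff_le:
  fixes A :: "'a::real_normed_vector set"
  assumes "A \<noteq> {}" "A \<subseteq> cball 0 1"
  shows "(SUP y\<in>A. norm (z - y)) \<le> norm z + 1"
proof (rule cSUP_least[OF assms(1)])
  fix y assume "y \<in> A"
  then have "norm y \<le> 1" using assms(2) by auto
  then show "norm (z - y) \<le> norm z + 1" using norm_triangle_ineq4[of z y] by linarith
qed

lemma SUP_norm_diff_lipschitz:
  fixes A :: "'a::real_normed_vector set"
  assumes "A \<noteq> {}" "bounded A"
  shows "(SUP y\<in>A. norm (z - y)) \<le> (SUP y\<in>A. norm (w - y)) + norm (z - w)"
proof (rule cSUP_least[OF assms(1)])
  fix y assume "y \<in> A"
  have "norm (z - y) \<le> norm (w - y) + norm (z - w)"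
    using norm_triangle_ineq[of "w - y" "z - w"] by simp
  also have "\<dots> \<le> (SUP y\<in>A. norm (w - y)) + norm (z - w)"
    using cSUP_upper[OF \<open>y \<in> A\<close> bdd_above_norm_diff[OF assms(2)]] by simp
  finally show "norm (z - y) \<le> (SUP y\<in>A. norm (w - y)) + norm (z - w)" .
qed

lemma SUP_norm_diff_scaleR_le:
  fixes A :: "'a::real_normed_vector set"
  assumes "A \<noteq> {}" "A \<subseteq> cball 0 1" and r: "0 \<le> r" "r \<le> 1"
  shows "(SUP y\<in>A. norm (r *\<^sub>R z - y)) \<le> r * (SUP y\<in>A. norm (z - y)) + (1 - r)"
proof (rule cSUP_least[OF assms(1)])
  fix y assume y: "y \<in> A"
  have bdd: "bdd_above ((\<lambda>y. norm (z - y)) ` A)"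
    using bounded_subset[OF bounded_cball assms(2)] by (rule bdd_above_norm_diff)
  have "r *\<^sub>R z - y = r *\<^sub>R (z - y) - (1 - r) *\<^sub>R y" by (simp add: algebra_simps)
  then have "norm (r *\<^sub>R z - y) \<le> r * norm (z - y) + (1 - r) * norm y"
    using norm_triangle_ineq4[of "r *\<^sub>R (z - y)" "(1 - r) *\<^sub>R y"] r by simp
  also have "\<dots> \<le> r * (SUP y\<in>A. norm (z - y)) + (1 - r)"
    using y assms(2) r cSUP_upper[OF y bdd]
    by (intro add_mono mult_left_mono mult_left_le) auto
  finally show "norm (r *\<^sub>R z - y) \<le> r * (SUP y\<in>A. norm (z - y)) + (1 - r)" .
qed

lemma SUP_norm_diff_scaleR_eq:
  fixes A :: "'a::real_normed_vector set"
  assumes "A \<noteq> {}" "A \<subseteq> cball 0 1" and "norm x = 1" and "0 \<le> r" "r \<le> 1"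
    and "(SUP y\<in>A. norm (x - y)) = 2"
  shows "(SUP y\<in>A. norm (r *\<^sub>R x - y)) = norm (r *\<^sub>R x) + 1"
proof -
  have "bounded A" using bounded_subset[OF bounded_cball assms(2)] .
  have "x - r *\<^sub>R x = (1 - r) *\<^sub>R x" by (simp add: algebra_simps)
  then have "norm (x - r *\<^sub>R x) = 1 - r" using assms(3-5) by simp
  then have "2 \<le> (SUP y\<in>A. norm (r *\<^sub>R x - y)) + (1 - r)"
    using SUP_norm_diff_lipschitz[OF assms(1) \<open>bounded A\<close>, of x "r *\<^sub>R x"] assms(6) by simp
  then show ?thesis
    using SUP_norm_diff_le[OF assms(1,2), of "r *\<^sub>R x"] assms(3,4) by simp
qed

lemma SUP_norm_diff_eq_of_scaleR:
  fixes A :: "'a::real_normed_vector set"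
  assumes "A \<noteq> {}" "A \<subseteq> cball 0 1" and "norm x = 1" and "0 < r" "r \<le> 1"
    and "(SUP y\<in>A. norm (r *\<^sub>R x - y)) = norm (r *\<^sub>R x) + 1"
  shows "(SUP y\<in>A. norm (x - y)) = 2"
proof -
  have "r + 1 \<le> r * (SUP y\<in>A. norm (x - y)) + (1 - r)"
    using SUP_norm_diff_scaleR_le[OF assms(1,2), of r x] assms(3-6) by simp
  then have "2 \<le> (SUP y\<in>A. norm (x - y))"
    using \<open>0 < r\<close> by (simp add: algebra_simps)
  then show ?thesis
    using SUP_norm_diff_le[OF assms(1,2), of x] assms(3) by simp
qed

definition daugavet_point_for :: "('a::real_normed_vector set \<Rightarrow> bool) \<Rightarrow> 'a \<Rightarrow> bool" where
  "daugavet_point_for C z \<longleftrightarrow> z \<in> cball 0 1 \<and>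
     (\<forall>A. C A \<longrightarrow> (SUP y\<in>A. norm (z - y)) = norm z + 1)"

lemma daugavet_point_for_scaleR:
  assumes C: "\<And>A. C A \<Longrightarrow> A \<noteq> {} \<and> A \<subseteq> cball 0 1" and "norm x = 1" "0 \<le> r" "r \<le> 1"
    and "daugavet_point_for C x"
  shows "daugavet_point_for C (r *\<^sub>R x)"
  unfolding daugavet_point_for_def
proof (intro conjI allI impI)
  show "r *\<^sub>R x \<in> cball 0 1" using assms(2-4) by simp
  fix A assume "C A"
  then show "(SUP y\<in>A. norm (r *\<^sub>R x - y)) = norm (r *\<^sub>R x) + 1"
    using C[OF \<open>C A\<close>] assms(2-5) SUP_norm_diff_scaleR_eq[of A x r]
    unfolding daugavet_point_for_def by simp
qed

lemma daugavet_point_for_of_scaleR: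
  assumes C: "\<And>A. C A \<Longrightarrow> A \<noteq> {} \<and> A \<subseteq> cball 0 1" and "norm x = 1" "0 < r" "r \<le> 1"
    and "daugavet_point_for C (r *\<^sub>R x)"
  shows "daugavet_point_for C x"
  unfolding daugavet_point_for_def
proof (intro conjI allI impI)
  show "x \<in> cball 0 1" using assms(2) by simp
  fix A assume "C A"
  then show "(SUP y\<in>A. norm (x - y)) = norm x + 1"
    using C[OF \<open>C A\<close>] assms(2-5) SUP_norm_diff_eq_of_scaleR[of A x r]
    unfolding daugavet_point_for_def by simp
qed

lemma daugavet_point_for_iff_all_scaleR:
  assumes "\<And>A. C A \<Longrightarrow> A \<noteq> {} \<and> A \<subseteq> cball 0 1" and "norm x = 1"
  shows "daugavet_point_for C x \<longleftrightarrow> (\<forall>r\<in>{0..1}. daugavet_point_for C (r *\<^sub>R x))"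
proof
  assume "\<forall>r\<in>{0..1}. daugavet_point_for C (r *\<^sub>R x)"
  then show "daugavet_point_for C x" by (metis atLeastAtMost_iff order_refl zero_le_one scaleR_one)
qed (use daugavet_point_for_scaleR[OF assms] in simp)

lemma daugavet_point_for_iff_ex_scaleR:
  assumes "\<And>A. C A \<Longrightarrow> A \<noteq> {} \<and> A \<subseteq> cball 0 1" and "norm x = 1"
  shows "daugavet_point_for C x \<longleftrightarrow> (\<exists>r\<in>{0<..<1}. daugavet_point_for C (r *\<^sub>R x))"
proof
  assume "daugavet_point_for C x"
  then have "daugavet_point_for C ((1/2) *\<^sub>R x)"
    using daugavet_point_for_scaleR[OF assms, where r="1/2"] by simp
  then show "\<exists>r\<in>{0<..<1}. daugavet_point_for C (r *\<^sub>R x)" by (intro bexI[of _ "1/2"]) auto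
next
  assume "\<exists>r\<in>{0<..<1}. daugavet_point_for C (r *\<^sub>R x)"
  then obtain r where "r \<in> {0<..<1}" "daugavet_point_for C (r *\<^sub>R x)" ..
  then show "daugavet_point_for C x" using daugavet_point_for_of_scaleR[OF assms, where r=r] by simp
qed

lemma is_slice_subset_ball: "is_slice A \<Longrightarrow> A \<noteq> {} \<and> A \<subseteq> cball 0 1"
  unfolding is_slice_def slice_def by auto

lemma is_rel_weakly_open_ball_subset_ball:
  "is_rel_weakly_open_ball A \<Longrightarrow> A \<noteq> {} \<and> A \<subseteq> cball 0 1"
  unfolding is_rel_weakly_open_ball_def by auto

lemma is_ccs_subset_ball:
  fixes A :: "'a::real_normed_vector set"
  assumes "is_ccs A"
  shows "A \<noteq> {} \<and> A \<subseteq> cball 0 1"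
proof -
  obtain n :: nat and lam :: "nat \<Rightarrow> real" and S :: "nat \<Rightarrow> 'a set"
    where lam: "\<forall>i<n. 0 < lam i" "(\<Sum>i<n. lam i) = 1" and S: "\<forall>i<n. is_slice (S i)"
      and A: "A = {\<Sum>i<n. lam i *\<^sub>R y i | y. \<forall>i<n. y i \<in> S i}"
    using assms unfolding is_ccs_def by blast
  have S_ball: "S i \<noteq> {}" "S i \<subseteq> cball 0 1" if "i < n" for i
    using S that is_slice_subset_ball by blast+
  then have "\<forall>i\<in>{..<n}. \<exists>z. z \<in> S i" by blast
  then obtain y where "\<forall>i\<in>{..<n}. y i \<in> S i" by (rule bchoice[THEN exE])
  then have "A \<noteq> {}" unfolding A by auto
  moreover have "(\<Sum>i<n. lam i *\<^sub>R y i) \<in> cball 0 1" if "\<forall>i<n. y i \<in> S i" for y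
  proof -
    have "\<forall>i<n. y i \<in> cball 0 1" using S_ball(2) that by blast
    then show ?thesis using lam by (intro convex_sum) auto
  qed
  then have "A \<subseteq> cball 0 1" unfolding A by blast
  ultimately show ?thesis ..
qed

theorem mainTheorem17:
  fixes x :: "'a::banach"
  assumes "norm x = 1"
  shows "(daugavet_point x \<longleftrightarrow> (\<forall>r\<in>{0..1}. daugavet_point (r *\<^sub>R x))) \<and>
         (daugavet_point x \<longleftrightarrow> (\<exists>r\<in>{0<..<1}. daugavet_point (r *\<^sub>R x))) \<and>
         (super_daugavet_point x \<longleftrightarrow> (\<forall>r\<in>{0..1}. super_daugavet_point (r *\<^sub>R x))) \<and>
         (super_daugavet_point x \<longleftrightarrow> (\<exists>r\<in>{0<..<1}. super_daugavet_point (r *\<^sub>R x))) \<and>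
         (ccs_daugavet_point x \<longleftrightarrow> (\<forall>r\<in>{0..1}. ccs_daugavet_point (r *\<^sub>R x))) \<and>
         (ccs_daugavet_point x \<longleftrightarrow> (\<exists>r\<in>{0<..<1}. ccs_daugavet_point (r *\<^sub>R x)))"
proof -
  have defs: "daugavet_point = daugavet_point_for is_slice"
    "super_daugavet_point = daugavet_point_for is_rel_weakly_open_ball"
    "ccs_daugavet_point = daugavet_point_for is_ccs"
    by (auto simp: fun_eq_iff daugavet_point_def super_daugavet_point_def
        ccs_daugavet_point_def daugavet_point_for_def)
  show ?thesis
    unfolding defs
    by (intro conjI daugavet_point_for_iff_all_scaleR daugavet_point_for_iff_ex_scaleR assms)
      (auto dest: is_slice_subset_ball is_rel_weakly_open_ball_subset_ball is_ccs_subset_ball)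
qed

end
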